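(* Let $(X,m)$ be an iterative midpoint set with associated infinitary operation $M$, let $I$ be a set, and let $s,t\in\mathcal{T}_I$ satisfy $\mathrm{w}(s)=\mathrm{w}(t)$. Then $\mathrm{val}(s,x)=\mathrm{val}(t,x)$ for all $x\colon I\to X$.
   Context: $(X,m)$ is a midpoint set ($m(x,x)=x$, $m(x,y)=m(y,x)$, $m(m(x,y),m(z,w))=m(m(x,z),m(y,w))$) that is iterative: for every set $Y$ and $h\colon Y\to X$, $t\colon Y\to Y$ there is a unique $u\colon Y\to X$ with $u(y)=m(h(y),u(t(y)))$; its associated $M\colon X^\omega\to X$ is the unique function with $M_l\,x_l=m(x_0,M_l\,x_{l+1})$. $\mathcal{T}_I$ is the smallest set with $I\subseteq\mathcal{T}_I$, containing the pair $(s,t)$ whenever $s,t\in\mathcal{T}_I$, and containing the sequence $(t_l)_l$ whenever each $t_l\in\mathcal{T}_I$ (well-founded trees with binary and $\omega$-branching nodes and $I$-labelled leaves). Interpretation: $\mathrm{val}(i,x)=x_i$, $\mathrm{val}((s,t),x)=m(\mathrm{val}(s,x),\mathrm{val}(t,x))$, $\mathrm{val}((t_l)_l,x)=M_l\,\mathrm{val}(t_l,x)$. Weight $\mathrm{w}(t)\colon I\to[0,1]$: $\mathrm{w}(i)(j)=\delta_{ij}$, $\mathrm{w}((s,t))(j)=\tfrac12\mathrm{w}(s)(j)+\tfrac12\mathrm{w}(t)(j)$, $\mathrm{w}((t_l)_l)(j)=\sum_{l\ge0}2^{-(l+1)}\mathrm{w}(t_l)(j)$. *)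

theory Defs
  imports Complex_Main
begin

definition midpoint_set :: "('a \<Rightarrow> 'a \<Rightarrow> 'a) \<Rightarrow> bool" where
  "midpoint_set m \<longleftrightarrow>
     (\<forall>x. m x x = x) \<and> (\<forall>x y. m x y = m y x) \<and>
     (\<forall>x y z w. m (m x y) (m z w) = m (m x z) (m y w))"

definition iterative_on :: "'y itself \<Rightarrow> ('a \<Rightarrow> 'a \<Rightarrow> 'a) \<Rightarrow> bool" where
  "iterative_on _ m \<longleftrightarrow>
     (\<forall>(Y::'y set) (h::'y \<Rightarrow> 'a) (t::'y \<Rightarrow> 'y). (\<forall>y\<in>Y. t y \<in> Y) \<longrightarrow>
        (\<exists>u. (\<forall>y\<in>Y. u y = m (h y) (u (t y))) \<and>
             (\<forall>u'. (\<forall>y\<in>Y. u' y = m (h y) (u' (t y))) \<longrightarrow> (\<forall>y\<in>Y. u' y = u y))))"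

text \<open>HOL cannot quantify over all types; we quantify over
  all sets Y of elements of type (nat \<Rightarrow> 'a) + nat, a universe containing X^\<omega> and
  all countable sets, which suffices to recover iterativity for arbitrary sets Y.\<close>
definition iterative :: "('a \<Rightarrow> 'a \<Rightarrow> 'a) \<Rightarrow> bool" where
  "iterative m \<longleftrightarrow> midpoint_set m \<and> iterative_on TYPE((nat \<Rightarrow> 'a) + nat) m"

definition Minf :: "('a \<Rightarrow> 'a \<Rightarrow> 'a) \<Rightarrow> (nat \<Rightarrow> 'a) \<Rightarrow> 'a" where
  "Minf m = (THE M. \<forall>xs. M xs = m (xs 0) (M (\<lambda>l. xs (Suc l))))"

datatype 'i tree = Leaf 'i | Node2 "'i tree" "'i tree" | NodeW "nat \<Rightarrow> 'i tree"

primrec val :: "('a \<Rightarrow> 'a \<Rightarrow> 'a) \<Rightarrow> 'i tree \<Rightarrow> ('i \<Rightarrow> 'a) \<Rightarrow> 'a" where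
  "val m (Leaf i) x = x i"
| "val m (Node2 s t) x = m (val m s x) (val m t x)"
| "val m (NodeW ts) x = Minf m (\<lambda>l. val m (ts l) x)"

primrec weight :: "'i tree \<Rightarrow> 'i \<Rightarrow> real" where
  "weight (Leaf i) j = (if i = j then 1 else 0)"
| "weight (Node2 s t) j = weight s j / 2 + weight t j / 2"
| "weight (NodeW ts) j = (\<Sum>l. weight (ts l) j / 2 ^ (Suc l))"

end

theory Submission
  imports Defs "HOL-Combinatorics.Permutations" "HOL-Library.Multiset"
begin

text \<open>Cut both trees at a common depth \<open>n\<close>. The value of a tree is the balanced \<open>2^n\<close>-fold
  mean of the values of its frontier at depth \<open>n\<close>, and by commutativity and the medial law such
  a mean depends only on the multiset of its arguments. Since the leaves of a well-founded tree
  carry all of its weight, for large \<open>n\<close> the two frontiers consist mostly of leaves, and equal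
  total weights then force them to have at least half of their members in common. Averaging the
  common half first writes \<open>val s = m c (val s')\<close> and \<open>val t = m c (val t')\<close> with the same \<open>c\<close>
  and \<open>weight s' = weight t'\<close>. The relation "values of trees of equal weight" is thus
  self-reproducing, and iterativity makes any such relation part of the equality.\<close>

section \<open>Iterativity\<close>

lemma iterative_solution_exists:
  fixes m :: "'a \<Rightarrow> 'a \<Rightarrow> 'a" and Y :: "((nat \<Rightarrow> 'a) + nat) set"
  assumes "iterative m" and "\<forall>y\<in>Y. t y \<in> Y"
  shows "\<exists>u. \<forall>y\<in>Y. u y = m (h y) (u (t y))"
  using assms unfolding iterative_def iterative_on_def by blast

lemma iterative_solution_unique:
  fixes m :: "'a \<Rightarrow> 'a \<Rightarrow> 'a" and Y :: "((nat \<Rightarrow> 'a) + nat) set"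
  assumes "iterative m" and "\<forall>y\<in>Y. t y \<in> Y"
    and "\<forall>y\<in>Y. u1 y = m (h y) (u1 (t y))" and "\<forall>y\<in>Y. u2 y = m (h y) (u2 (t y))"
    and "y \<in> Y"
  shows "u1 y = u2 y"
proof -
  obtain u where "\<forall>u'. (\<forall>y\<in>Y. u' y = m (h y) (u' (t y))) \<longrightarrow> (\<forall>y\<in>Y. u' y = u y)"
    using assms(1,2) unfolding iterative_def iterative_on_def by blast
  with assms(3-5) show ?thesis by metis
qed

lemma Minf_unfold:
  fixes m :: "'a \<Rightarrow> 'a \<Rightarrow> 'a"
  assumes it: "iterative m"
  shows "Minf m xs = m (xs 0) (Minf m (\<lambda>l. xs (Suc l)))"
proof -
  define h :: "(nat \<Rightarrow> 'a) + nat \<Rightarrow> 'a" where "h = case_sum (\<lambda>f. f 0) (\<lambda>_. undefined)"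
  define t :: "(nat \<Rightarrow> 'a) + nat \<Rightarrow> (nat \<Rightarrow> 'a) + nat"
    where "t = case_sum (\<lambda>f. Inl (\<lambda>l. f (Suc l))) Inr"
  obtain u where u: "\<forall>y\<in>UNIV. u y = m (h y) (u (t y))"
    using iterative_solution_exists[OF it, of UNIV t h] by auto
  define M where "M xs = u (Inl xs)" for xs
  have M_unfold: "\<forall>xs. M xs = m (xs 0) (M (\<lambda>l. xs (Suc l)))"
  proof
    fix xs show "M xs = m (xs 0) (M (\<lambda>l. xs (Suc l)))"
      using bspec[OF u, of "Inl xs"] by (simp add: M_def h_def t_def)
  qed
  have M_unique: "M' = M" if M': "\<forall>xs. M' xs = m (xs 0) (M' (\<lambda>l. xs (Suc l)))" for M'
  proof
    fix xs
    have "\<forall>y\<in>UNIV. case_sum M' (u \<circ> Inr) y = m (h y) (case_sum M' (u \<circ> Inr) (t y))"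
    proof
      fix y show "case_sum M' (u \<circ> Inr) y = m (h y) (case_sum M' (u \<circ> Inr) (t y))"
      proof (cases y)
        case (Inl f)
        then show ?thesis using spec[OF M', of f] by (simp add: h_def t_def)
      next
        case (Inr n)
        then show ?thesis using bspec[OF u UNIV_I, of y] by (metis comp_apply sum.case(2) t_def)
      qed
    qed
    from iterative_solution_unique[OF it _ this u, of "Inl xs"] show "M' xs = M xs"
      by (simp add: M_def)
  qed
  have "Minf m = M"
    unfolding Minf_def by (rule the_equality) (fact M_unfold, erule M_unique)
  then show ?thesis by (simp only:) (rule spec[OF M_unfold])
qed

text \<open>Encoding a pair as a sequence places the relation inside the universe on which
  iterativity is assumed; both projections then solve the same iteration.\<close>
lemma iterative_coinduct:
  fixes m :: "'a \<Rightarrow> 'a \<Rightarrow> 'a"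
  assumes it: "iterative m"
    and step: "\<And>a b. (a, b) \<in> R \<Longrightarrow> \<exists>c a' b'. (a', b') \<in> R \<and> a = m c a' \<and> b = m c b'"
    and ab: "(a, b) \<in> R"
  shows "a = b"
proof -
  have "\<forall>p\<in>R. \<exists>q. snd q \<in> R \<and> fst p = m (fst q) (fst (snd q)) \<and> snd p = m (fst q) (snd (snd q))"
  proof
    fix p assume "p \<in> R"
    then obtain c a' b' where "(a', b') \<in> R" "fst p = m c a'" "snd p = m c b'"
      using step[of "fst p" "snd p"] by auto
    then show "\<exists>q. snd q \<in> R \<and> fst p = m (fst q) (fst (snd q)) \<and> snd p = m (fst q) (snd (snd q))"
      by (intro exI[of _ "(c, a', b')"]) simp
  qed
  then obtain W where W: "\<forall>p\<in>R. snd (W p) \<in> R \<and>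
      fst p = m (fst (W p)) (fst (snd (W p))) \<and> snd p = m (fst (W p)) (snd (snd (W p)))"
    by (rule bchoice[THEN exE])
  define enc :: "'a \<times> 'a \<Rightarrow> (nat \<Rightarrow> 'a) + nat"
    where "enc p = Inl (\<lambda>n. if n = 0 then fst p else snd p)" for p
  define dec :: "(nat \<Rightarrow> 'a) + nat \<Rightarrow> 'a \<times> 'a"
    where "dec = case_sum (\<lambda>f. (f 0, f 1)) (\<lambda>_. undefined)"
  have dec_enc [simp]: "dec (enc p) = p" for p by (simp add: enc_def dec_def)
  define h where "h y = fst (W (dec y))" for y
  define t where "t y = enc (snd (W (dec y)))" for y
  have closed: "\<forall>y\<in>enc ` R. t y \<in> enc ` R" using W by (auto simp: t_def)
  have "\<forall>y\<in>enc ` R. fst (dec y) = m (h y) (fst (dec (t y)))"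
    and "\<forall>y\<in>enc ` R. snd (dec y) = m (h y) (snd (dec (t y)))"
    using W by (auto simp: h_def t_def)
  from iterative_solution_unique[OF it closed this] ab
  have "fst (dec (enc (a, b))) = snd (dec (enc (a, b)))" by blast
  then show ?thesis by simp
qed

section \<open>Dyadic means\<close>

definition indexed_mset :: "nat \<Rightarrow> (nat \<Rightarrow> 'b) \<Rightarrow> 'b multiset" where
  "indexed_mset n f = image_mset f (mset_set {..<n})"

lemma size_indexed_mset [simp]: "size (indexed_mset n f) = n"
  by (simp add: indexed_mset_def)

lemma indexed_mset_Suc: "indexed_mset (Suc n) f = add_mset (f n) (indexed_mset n f)"
  by (simp add: indexed_mset_def lessThan_Suc)

lemma indexed_mset_add:
  "indexed_mset (a + b) f = indexed_mset a f + indexed_mset b (\<lambda>i. f (a + i))"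
  by (induction b) (simp_all add: indexed_mset_Suc, simp add: indexed_mset_def)

lemma indexed_mset_cong:
  "(\<And>i. i < n \<Longrightarrow> f i = g i) \<Longrightarrow> indexed_mset n f = indexed_mset n g"
  unfolding indexed_mset_def by (rule image_mset_cong) simp

lemma image_indexed_mset: "image_mset g (indexed_mset n f) = indexed_mset n (\<lambda>i. g (f i))"
  by (simp add: indexed_mset_def image_mset.compositionality comp_def)

lemma ex_indexed_mset: "\<exists>f. indexed_mset (size A) f = A"
proof -
  obtain xs where "mset xs = A" using ex_mset by blast
  moreover have "mset xs = indexed_mset (length xs) (nth xs)"
    by (metis indexed_mset_def map_nth mset_map mset_upt atLeast0LessThan)
  ultimately show ?thesis by auto
qed

lemma ex_submset_of_size: "k \<le> size M \<Longrightarrow> \<exists>C. C \<subseteq># M \<and> size C = k"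
proof -
  assume k: "k \<le> size M"
  obtain xs where xs: "mset xs = M" using ex_mset by blast
  have "M = mset (take k xs) + mset (drop k xs)"
    by (simp flip: xs mset_append)
  then show ?thesis
    using k xs by (intro exI[of _ "mset (take k xs)"]) (auto simp: mset_subset_eq_exists_conv)
qed

fun dyadic_mean :: "('a \<Rightarrow> 'a \<Rightarrow> 'a) \<Rightarrow> nat \<Rightarrow> (nat \<Rightarrow> 'a) \<Rightarrow> 'a" where
  "dyadic_mean m 0 f = f 0"
| "dyadic_mean m (Suc k) f = m (dyadic_mean m k f) (dyadic_mean m k (\<lambda>i. f (2^k + i)))"

lemma dyadic_mean_cong:
  "(\<And>i. i < 2^k \<Longrightarrow> f i = g i) \<Longrightarrow> dyadic_mean m k f = dyadic_mean m k g"
proof (induction k arbitrary: f g)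
  case (Suc k)
  have "dyadic_mean m k f = dyadic_mean m k g"
    and "dyadic_mean m k (\<lambda>i. f (2^k + i)) = dyadic_mean m k (\<lambda>i. g (2^k + i))"
    by (rule Suc.IH; use Suc.prems in simp)+
  then show ?case by simp
qed simp

locale comm_medial =
  fixes m :: "'a \<Rightarrow> 'a \<Rightarrow> 'a"
  assumes comm: "m x y = m y x"
    and medial: "m (m x y) (m z w) = m (m x z) (m y w)"

lemma comm_medial_iterative: "iterative m \<Longrightarrow> comm_medial m"
  by unfold_locales (simp_all add: iterative_def midpoint_set_def)

context comm_medial
begin

abbreviation mean :: "nat \<Rightarrow> (nat \<Rightarrow> 'a) \<Rightarrow> 'a" where
  "mean \<equiv> dyadic_mean m"

lemma mean_swap_heads: "mean (Suc k) (f \<circ> Transposition.transpose 0 (2^k)) = mean (Suc k) f"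
proof (induction k arbitrary: f)
  case 0
  then show ?case by (simp add: comm)
next
  case (Suc k)
  define h :: nat where "h = 2^k"
  have h2: "2^Suc k = h + h" by (simp add: h_def)
  have hpos: "0 < h" by (simp add: h_def)
  define G where "G F i = (if i < h then F i else F (h + i))" for F :: "nat \<Rightarrow> 'a" and i
  text \<open>By the medial law, the first and third quarter of a mean at level \<open>Suc (Suc k)\<close>
    can be grouped into one half.\<close>
  have regroup: "mean (Suc (Suc k)) F
      = m (mean (Suc k) (G F)) (m (mean k (\<lambda>i. F (h + i))) (mean k (\<lambda>i. F (h + h + (h + i)))))"
    for F
  proof -
    have "mean (Suc (Suc k)) F = m (m (mean k F) (mean k (\<lambda>i. F (h + i))))
       (m (mean k (\<lambda>i. F (h + h + i))) (mean k (\<lambda>i. F (h + h + (h + i)))))"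
      by (simp only: dyadic_mean.simps h2 h_def[symmetric])
    also have "\<dots> = m (m (mean k F) (mean k (\<lambda>i. F (h + h + i))))
       (m (mean k (\<lambda>i. F (h + i))) (mean k (\<lambda>i. F (h + h + (h + i)))))"
      by (rule medial)
    also have "m (mean k F) (mean k (\<lambda>i. F (h + h + i))) = mean (Suc k) (G F)"
    proof -
      have "mean k (G F) = mean k F"
        by (rule dyadic_mean_cong) (simp add: G_def h_def)
      moreover have "mean k (\<lambda>i. G F (2^k + i)) = mean k (\<lambda>i. F (h + h + i))"
        by (rule dyadic_mean_cong) (simp add: G_def h_def add.assoc)
      ultimately show ?thesis by simp
    qed
    finally show ?thesis .
  qed
  let ?f' = "f \<circ> Transposition.transpose 0 (2^Suc k)"
  have "mean (Suc k) (G ?f') = mean (Suc k) (G f \<circ> Transposition.transpose 0 (2^k))"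
    by (rule dyadic_mean_cong)
      (use hpos in \<open>auto simp: G_def h2 transpose_def h_def[symmetric] mult_2\<close>)
  also have "\<dots> = mean (Suc k) (G f)" by (rule Suc.IH)
  finally have "mean (Suc k) (G ?f') = mean (Suc k) (G f)" .
  moreover have "mean k (\<lambda>i. ?f' (h + i)) = mean k (\<lambda>i. f (h + i))"
    by (rule dyadic_mean_cong) (use hpos in \<open>auto simp: h2 transpose_def h_def[symmetric]\<close>)
  moreover have "mean k (\<lambda>i. ?f' (h + h + (h + i))) = mean k (\<lambda>i. f (h + h + (h + i)))"
    by (rule dyadic_mean_cong) (use hpos in \<open>auto simp: h2 transpose_def h_def[symmetric]\<close>)
  ultimately show ?case by (simp only: regroup)
qed

lemma mean_transpose:
  "a < 2^k \<Longrightarrow> b < 2^k \<Longrightarrow> mean k (f \<circ> Transposition.transpose a b) = mean k f"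
proof (induction k arbitrary: f a b)
  case 0
  then show ?case by simp
next
  case (Suc k)
  define h :: nat where "h = 2^k"
  have h2: "2^Suc k = h + h" by (simp add: h_def)
  have hpos: "0 < h" by (simp add: h_def)
  have first_half: "mean (Suc k) (g \<circ> Transposition.transpose a b) = mean (Suc k) g"
    if "a < h" "b < h" for g a b
  proof -
    have "mean k (g \<circ> Transposition.transpose a b) = mean k g"
      using Suc.IH[of a b g] that by (simp add: h_def comp_def)
    moreover have "mean k (\<lambda>i. (g \<circ> Transposition.transpose a b) (2^k + i))
        = mean k (\<lambda>i. g (2^k + i))"
      by (rule dyadic_mean_cong) (use that in \<open>auto simp: h_def transpose_def\<close>)
    ultimately show ?thesis by simp
  qed
  have second_half: "mean (Suc k) (g \<circ> Transposition.transpose a b) = mean (Suc k) g"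
    if "h \<le> a" "h \<le> b" "a < h + h" "b < h + h" for g a b
  proof -
    have "mean k (g \<circ> Transposition.transpose a b) = mean k g"
      by (rule dyadic_mean_cong) (use that in \<open>auto simp: h_def transpose_def\<close>)
    moreover have "mean k (\<lambda>i. (g \<circ> Transposition.transpose a b) (2^k + i))
        = mean k ((\<lambda>i. g (2^k + i)) \<circ> Transposition.transpose (a - h) (b - h))"
      by (rule dyadic_mean_cong) (use that in \<open>auto simp: h_def transpose_def\<close>)
    moreover have "\<dots> = mean k (\<lambda>i. g (2^k + i))"
      by (rule Suc.IH) (use that in \<open>auto simp: h_def\<close>)
    ultimately show ?thesis by simp
  qed
  text \<open>A transposition across the halves is conjugate, by transpositions inside the halves,
    to the transposition of the two heads.\<close>
  have across: "mean (Suc k) (g \<circ> Transposition.transpose a b) = mean (Suc k) g"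
    if ab: "a < h" "h \<le> b" "b < h + h" for g a b
  proof -
    define t1 where "t1 = Transposition.transpose (0::nat) a"
    define t2 where "t2 = Transposition.transpose h b"
    define t0 where "t0 = Transposition.transpose (0::nat) h"
    have conj: "Transposition.transpose a b = t1 \<circ> t2 \<circ> t0 \<circ> t1 \<circ> t2"
      using ab hpos by (auto simp: fun_eq_iff t1_def t2_def t0_def transpose_def)
    have "mean (Suc k) (g \<circ> Transposition.transpose a b)
        = mean (Suc k) ((g \<circ> t1 \<circ> t2 \<circ> t0 \<circ> t1) \<circ> t2)"
      by (simp add: conj o_assoc)
    also have "\<dots> = mean (Suc k) ((g \<circ> t1 \<circ> t2 \<circ> t0) \<circ> t1)"
      unfolding t2_def by (rule second_half) (use ab in auto)
    also have "\<dots> = mean (Suc k) (g \<circ> t1 \<circ> t2 \<circ> t0)"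
      unfolding t1_def by (rule first_half) (use ab hpos in auto)
    also have "\<dots> = mean (Suc k) (g \<circ> t1 \<circ> t2)"
      unfolding t0_def h_def by (rule mean_swap_heads)
    also have "\<dots> = mean (Suc k) (g \<circ> t1)"
      unfolding t2_def by (rule second_half) (use ab in auto)
    also have "\<dots> = mean (Suc k) g"
      unfolding t1_def by (rule first_half) (use ab hpos in auto)
    finally show ?thesis .
  qed
  have "a < h + h" "b < h + h" using Suc.prems h2 by auto
  then consider "a < h" "b < h" | "h \<le> a" "h \<le> b" | "a < h" "h \<le> b" | "b < h" "h \<le> a"
    by linarith
  then show ?case
  proof cases
    case 1
    then show ?thesis by (rule first_half)
  next
    case 2
    then show ?thesis using \<open>a < h + h\<close> \<open>b < h + h\<close> by (rule second_half)
  next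
    case 3
    then show ?thesis using \<open>b < h + h\<close> by (rule across)
  next
    case 4
    then have "mean (Suc k) (f \<circ> Transposition.transpose b a) = mean (Suc k) f"
      using \<open>a < h + h\<close> by (intro across)
    then show ?thesis by (metis transpose_commute)
  qed
qed

lemma mean_permutes:
  assumes "p permutes {..<2^k}"
  shows "mean k (f \<circ> p) = mean k f"
  using assms finite_lessThan
proof (induction p arbitrary: f rule: permutes_induct)
  case (swap a b p)
  have "mean k (f \<circ> (Transposition.transpose a b \<circ> p))
      = mean k ((f \<circ> Transposition.transpose a b) \<circ> p)"
    by (simp add: o_assoc)
  also have "\<dots> = mean k (f \<circ> Transposition.transpose a b)" by (rule swap.IH)
  also have "\<dots> = mean k f" using swap.hyps by (intro mean_transpose) auto
  finally show ?case .
qed simp_all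

lemma mean_indexed_mset_eq:
  assumes "indexed_mset (2^k) f = indexed_mset (2^k) g"
  shows "mean k f = mean k g"
proof -
  have "mset (map f [0..<2^k]) = mset (map g [0..<2^k])"
    using assms by (simp add: indexed_mset_def atLeast0LessThan)
  then obtain p where p: "p permutes {..<2^k}" "permute_list p (map g [0..<2^k]) = map f [0..<2^k]"
    by (rule mset_eq_permutation) simp
  have "f i = g (p i)" if "i < 2^k" for i
  proof -
    have "f i = permute_list p (map g [0..<2^k]) ! i" using p(2) that by simp
    also have "\<dots> = g (p i)"
      using that permutes_in_image[OF p(1)] permute_list_nth[of p "map g [0..<2^k]" i] p(1) by simp
    finally show ?thesis .
  qed
  then have "mean k f = mean k (g \<circ> p)" by (intro dyadic_mean_cong) simp
  also have "\<dots> = mean k g" by (rule mean_permutes[OF p(1)])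
  finally show ?thesis .
qed

lemma mean_split:
  assumes "indexed_mset (2^Suc k) f = indexed_mset (2^k) g + indexed_mset (2^k) h"
  shows "mean (Suc k) f = m (mean k g) (mean k h)"
proof -
  define f' where "f' i = (if i < 2^k then g i else h (i - 2^k))" for i
  have "indexed_mset (2^Suc k) f' = indexed_mset (2^k) g + indexed_mset (2^k) h"
    unfolding power_Suc mult_2 indexed_mset_add
    by (intro arg_cong2[of _ _ _ _ "(+)"] indexed_mset_cong) (simp_all add: f'_def)
  then have "mean (Suc k) f = mean (Suc k) f'"
    using assms by (intro mean_indexed_mset_eq) simp
  also have "\<dots> = m (mean k f') (mean k (\<lambda>i. f' (2^k + i)))" by simp
  also have "mean k f' = mean k g" by (rule dyadic_mean_cong) (simp add: f'_def)
  also have "mean k (\<lambda>i. f' (2^k + i)) = mean k h" by (rule dyadic_mean_cong) (simp add: f'_def)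
  finally show ?thesis .
qed

end

section \<open>Frontiers of trees\<close>

text \<open>A leaf is its own left and right child; this is consistent with \<open>val\<close> because \<open>m\<close> is
  idempotent and with \<open>weight\<close> because both halves carry the same weight.\<close>
fun left_child :: "'i tree \<Rightarrow> 'i tree" where
  "left_child (Leaf i) = Leaf i"
| "left_child (Node2 s t) = s"
| "left_child (NodeW ts) = ts 0"

fun right_child :: "'i tree \<Rightarrow> 'i tree" where
  "right_child (Leaf i) = Leaf i"
| "right_child (Node2 s t) = t"
| "right_child (NodeW ts) = NodeW (\<lambda>l. ts (Suc l))"

fun is_leaf :: "'i tree \<Rightarrow> bool" where
  "is_leaf (Leaf i) = True"
| "is_leaf (Node2 s t) = False"
| "is_leaf (NodeW ts) = False"

lemma val_children:
  assumes "iterative m"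
  shows "val m t x = m (val m (left_child t) x) (val m (right_child t) x)"
proof (cases t)
  case (Leaf i)
  have "m (x i) (x i) = x i" using assms by (simp add: iterative_def midpoint_set_def)
  then show ?thesis using Leaf by simp
next
  case (NodeW ts)
  then show ?thesis
    by (simp only: val.simps left_child.simps right_child.simps) (rule Minf_unfold[OF assms])
qed simp

lemma summable_halving:
  fixes a :: "nat \<Rightarrow> real"
  assumes "\<And>l. 0 \<le> a l" and "\<And>l. a l \<le> 1"
  shows "summable (\<lambda>l. a l / 2^Suc l)"
proof (rule summable_comparison_test'[OF sums_summable[OF power_half_series], of 0])
  fix l
  show "norm (a l / 2^Suc l) \<le> (1/2)^Suc l"
    using assms[of l] by (simp add: power_divide divide_right_mono)
qed

text \<open>Both bounds must be proved together: the series defining the weight of an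
  \<open>\<omega>\<close>-node is only known to converge once the weights of its subtrees are bounded.\<close>
lemma weight_nonneg_and_sum_le_1: "0 \<le> weight t j \<and> (finite S \<longrightarrow> sum (weight t) S \<le> 1)"
proof (induction t arbitrary: j S)
  case (Leaf i)
  then show ?case by simp
next
  case (Node2 s t)
  show ?case
  proof (intro conjI impI)
    show "0 \<le> weight (Node2 s t) j" using Node2.IH by simp
    assume "finite S"
    with Node2.IH have "sum (weight s) S \<le> 1" "sum (weight t) S \<le> 1" by blast+
    then show "sum (weight (Node2 s t)) S \<le> 1"
      by (simp add: sum.distrib sum_divide_distrib[symmetric])
  qed
next
  case (NodeW ts)
  have nonneg: "0 \<le> weight (ts l) j" and sum_le: "finite S \<Longrightarrow> sum (weight (ts l)) S \<le> 1"
    for l j S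
    using NodeW by auto
  have summable: "summable (\<lambda>l. weight (ts l) j / 2^Suc l)" for j
    by (rule summable_halving) (use nonneg sum_le[of "{j}"] in auto)
  have "sum (weight (NodeW ts)) S \<le> 1" if "finite S"
  proof -
    have "sum (weight (NodeW ts)) S = (\<Sum>l. \<Sum>j\<in>S. weight (ts l) j / 2^Suc l)"
      unfolding weight.simps by (rule suminf_sum[symmetric]) (rule summable)
    also have "\<dots> \<le> (\<Sum>l. (1/2::real)^Suc l)"
    proof (rule suminf_le)
      fix l
      show "(\<Sum>j\<in>S. weight (ts l) j / 2^Suc l) \<le> (1/2::real)^Suc l"
        using sum_le[OF that, of l]
        by (simp add: sum_divide_distrib[symmetric] power_divide divide_right_mono)
    next
      show "summable (\<lambda>l. \<Sum>j\<in>S. weight (ts l) j / 2^Suc l)" by (intro summable_sum summable)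
    next
      show "summable (\<lambda>l. (1/2::real)^Suc l)" by (rule sums_summable[OF power_half_series])
    qed
    also have "\<dots> = 1" using power_half_series by (simp add: sums_iff)
    finally show ?thesis .
  qed
  moreover have "0 \<le> weight (NodeW ts) j"
    using summable by (simp add: suminf_nonneg nonneg)
  ultimately show ?case by simp
qed

lemma weight_nonneg: "0 \<le> weight t j"
  by (rule conjunct1[OF weight_nonneg_and_sum_le_1])

lemma sum_weight_le_1: "finite S \<Longrightarrow> sum (weight t) S \<le> 1"
  by (rule mp[OF conjunct2[OF weight_nonneg_and_sum_le_1]])

lemma weight_children: "weight t j = (weight (left_child t) j + weight (right_child t) j) / 2"
proof (cases t)
  case (NodeW ts)
  have summable: "summable (\<lambda>l. weight (ts l) j / 2^Suc l)" for ts :: "nat \<Rightarrow> 'a tree"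
    by (rule summable_halving) (use weight_nonneg sum_weight_le_1[of "{j}"] in auto)
  have "(\<Sum>l. weight (ts (Suc l)) j / 2^Suc (Suc l))
      = (\<Sum>l. weight (ts l) j / 2^Suc l) - weight (ts 0) j / 2"
    using suminf_split_head[OF summable] by simp
  moreover have "(\<Sum>l. weight (ts (Suc l)) j / 2^Suc (Suc l))
      = (\<Sum>l. weight (ts (Suc l)) j / 2^Suc l) / 2"
    using suminf_divide[OF summable[of "\<lambda>l. ts (Suc l)"], of 2] by (simp add: field_simps)
  ultimately show ?thesis using NodeW by simp
qed auto

fun frontier :: "nat \<Rightarrow> 'i tree \<Rightarrow> 'i tree multiset" where
  "frontier 0 t = {#t#}"
| "frontier (Suc n) t = frontier n (left_child t) + frontier n (right_child t)"

lemma size_frontier [simp]: "size (frontier n t) = 2^n"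
  by (induction n arbitrary: t) simp_all

lemma sum_weight_frontier: "(\<Sum>u\<in>#frontier n t. weight u j) = 2^n * weight t j"
proof (induction n arbitrary: t)
  case (Suc n)
  have "(\<Sum>u\<in>#frontier (Suc n) t. weight u j)
      = 2^n * (weight (left_child t) j + weight (right_child t) j)"
    by (simp only: frontier.simps image_mset_union sum_mset.union Suc.IH distrib_left)
  also have "\<dots> = 2^Suc n * weight t j" using weight_children[of t j] by simp
  finally show ?case .
qed simp

lemma val_frontier:
  assumes it: "iterative m" and g: "indexed_mset (2^n) g = frontier n t"
  shows "val m t x = dyadic_mean m n (\<lambda>i. val m (g i) x)"
  using g
proof (induction n arbitrary: t g)
  case 0
  then show ?case by (simp add: indexed_mset_def lessThan_Suc)
next
  case (Suc n)
  obtain g1 g2 where g1: "indexed_mset (2^n) g1 = frontier n (left_child t)"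
    and g2: "indexed_mset (2^n) g2 = frontier n (right_child t)"
    using ex_indexed_mset size_frontier by metis
  have "indexed_mset (2^Suc n) (\<lambda>i. val m (g i) x)
      = image_mset (\<lambda>u. val m u x) (frontier (Suc n) t)"
    by (simp only: Suc.prems[symmetric] image_indexed_mset)
  also have "\<dots> = indexed_mset (2^n) (\<lambda>i. val m (g1 i) x) + indexed_mset (2^n) (\<lambda>i. val m (g2 i) x)"
    by (simp only: frontier.simps image_mset_union g1[symmetric] g2[symmetric] image_indexed_mset)
  finally have "dyadic_mean m (Suc n) (\<lambda>i. val m (g i) x)
      = m (dyadic_mean m n (\<lambda>i. val m (g1 i) x)) (dyadic_mean m n (\<lambda>i. val m (g2 i) x))"
    by (rule comm_medial.mean_split[OF comm_medial_iterative[OF it]])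
  also have "\<dots> = val m t x"
    by (simp only: Suc.IH[OF g1, symmetric] Suc.IH[OF g2, symmetric] val_children[OF it, of t x])
  finally show ?case by (rule sym)
qed

fun balanced_tree :: "nat \<Rightarrow> (nat \<Rightarrow> 'i tree) \<Rightarrow> 'i tree" where
  "balanced_tree 0 f = f 0"
| "balanced_tree (Suc k) f = Node2 (balanced_tree k f) (balanced_tree k (\<lambda>i. f (2^k + i)))"

lemma val_balanced_tree: "val m (balanced_tree k f) x = dyadic_mean m k (\<lambda>i. val m (f i) x)"
  by (induction k arbitrary: f) simp_all

lemma weight_balanced_tree:
  "2^k * weight (balanced_tree k f) j = (\<Sum>u\<in>#indexed_mset (2^k) f. weight u j)"
proof (induction k arbitrary: f)
  case 0
  then show ?case by (simp add: indexed_mset_def lessThan_Suc)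
next
  case (Suc k)
  have "2^Suc k * weight (balanced_tree (Suc k) f) j
      = 2^k * weight (balanced_tree k f) j + 2^k * weight (balanced_tree k (\<lambda>i. f (2^k + i))) j"
    by (simp add: distrib_left)
  also have "\<dots> = (\<Sum>u\<in>#indexed_mset (2^Suc k) f. weight u j)"
    by (simp only: Suc.IH power_Suc mult_2 indexed_mset_add image_mset_union sum_mset.union)
  finally show ?case .
qed

lemma weight_balanced_tree_cancel:
  assumes "\<And>j. (\<Sum>u\<in>#C + indexed_mset (2^k) d. weight u j)
    = (\<Sum>u\<in>#C + indexed_mset (2^k) e. weight u j)"
  shows "weight (balanced_tree k d) = weight (balanced_tree k e)"
proof
  fix j
  have "2^k * weight (balanced_tree k d) j = 2^k * weight (balanced_tree k e) j"
    using assms[of j] by (simp add: weight_balanced_tree)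
  then show "weight (balanced_tree k d) j = weight (balanced_tree k e) j" by simp
qed

lemma val_split_frontier:
  assumes it: "iterative m"
    and split: "frontier (Suc k) t = indexed_mset (2^k) c + indexed_mset (2^k) d"
  shows "val m t x = m (val m (balanced_tree k c) x) (val m (balanced_tree k d) x)"
proof -
  obtain g where g: "indexed_mset (2^Suc k) g = frontier (Suc k) t"
    using ex_indexed_mset size_frontier by metis
  have "indexed_mset (2^Suc k) (\<lambda>i. val m (g i) x)
      = image_mset (\<lambda>u. val m u x) (frontier (Suc k) t)"
    by (simp only: g[symmetric] image_indexed_mset)
  also have "\<dots> = indexed_mset (2^k) (\<lambda>i. val m (c i) x) + indexed_mset (2^k) (\<lambda>i. val m (d i) x)"
    by (simp only: split image_mset_union image_indexed_mset)
  finally have "dyadic_mean m (Suc k) (\<lambda>i. val m (g i) x)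
      = m (dyadic_mean m k (\<lambda>i. val m (c i) x)) (dyadic_mean m k (\<lambda>i. val m (d i) x))"
    by (rule comm_medial.mean_split[OF comm_medial_iterative[OF it]])
  then show ?thesis by (simp add: val_frontier[OF it g] val_balanced_tree)
qed

section \<open>Frontiers are eventually almost all leaves\<close>

definition inner_count :: "nat \<Rightarrow> 'i tree \<Rightarrow> nat" where
  "inner_count n t = size (filter_mset (\<lambda>u. \<not> is_leaf u) (frontier n t))"

lemma inner_count_Suc:
  "inner_count (Suc n) t = inner_count n (left_child t) + inner_count n (right_child t)"
  by (simp add: inner_count_def)

lemma inner_count_Leaf: "inner_count n (Leaf i) = 0"
  by (induction n) (simp_all add: inner_count_Suc, simp add: inner_count_def)

lemma inner_count_le: "inner_count n t \<le> 2^n"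
  unfolding inner_count_def by (metis size_filter_mset_lesseq size_frontier)

lemma inner_count_NodeW:
  "L \<le> n \<Longrightarrow> inner_count n (NodeW ts)
     = (\<Sum>l<L. inner_count (n - Suc l) (ts l)) + inner_count (n - L) (NodeW (\<lambda>k. ts (k + L)))"
proof (induction L)
  case (Suc L)
  then have "n - L = Suc (n - Suc L)" by simp
  then have "inner_count (n - L) (NodeW (\<lambda>k. ts (k + L)))
      = inner_count (n - Suc L) (ts L) + inner_count (n - Suc L) (NodeW (\<lambda>k. ts (k + Suc L)))"
    by (simp add: inner_count_Suc)
  with Suc show ?case by simp
qed simp

lemma sum_power2_diff_telescope: "L \<le> n \<Longrightarrow> (\<Sum>l<L. 2^(n - Suc l)) + 2^(n - L) = (2::nat)^n"
proof (induction L)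
  case (Suc L)
  then have "2^(n - L) = 2^(n - Suc L) + (2::nat)^(n - Suc L)"
    by (metis Suc_diff_Suc Suc_le_lessD mult_2 power_Suc)
  with Suc show ?case by simp
qed simp

text \<open>The first \<open>L\<close> subtrees of an \<open>\<omega>\<close>-node are small by induction, and the remaining tail
  occupies only a \<open>2^-L\<close> share of the frontier.\<close>
lemma inner_count_NodeW_less:
  fixes \<epsilon> :: real
  assumes "\<epsilon> > 0" and L: "2 / \<epsilon> < 2^L" "L \<le> n"
    and head: "\<And>l. l < L \<Longrightarrow> inner_count (n - Suc l) (ts l) < \<epsilon> / 2 * 2^(n - Suc l)"
  shows "inner_count n (NodeW ts) < \<epsilon> * 2^n"
proof -
  have "(\<Sum>l<L. real (inner_count (n - Suc l) (ts l))) \<le> (\<Sum>l<L. \<epsilon> / 2 * 2^(n - Suc l))"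
    using head by (intro sum_mono less_imp_le) auto
  moreover have "real (inner_count (n - L) (NodeW (\<lambda>k. ts (k + L)))) \<le> 2^(n - L)"
    using inner_count_le[of "n - L"] by (simp flip: of_nat_le_iff)
  moreover have "real (inner_count n (NodeW ts)) = (\<Sum>l<L. real (inner_count (n - Suc l) (ts l)))
      + real (inner_count (n - L) (NodeW (\<lambda>k. ts (k + L))))"
    by (simp add: inner_count_NodeW[OF L(2)])
  ultimately have "real (inner_count n (NodeW ts)) \<le> \<epsilon> / 2 * (\<Sum>l<L. 2^(n - Suc l)) + 2^(n - L)"
    unfolding sum_distrib_left by linarith
  also have "\<dots> \<le> \<epsilon> / 2 * 2^n + 2^(n - L)"
  proof -
    have "(\<Sum>l<L. 2^(n - Suc l)) \<le> (2::nat)^n"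
      using sum_power2_diff_telescope[OF L(2)] by linarith
    then have "real (\<Sum>l<L. 2^(n - Suc l)) \<le> real (2^n)" by (simp only: of_nat_le_iff)
    then show ?thesis using \<open>\<epsilon> > 0\<close> by simp
  qed
  also have "\<dots> < \<epsilon> * 2^n"
  proof -
    have "1 < \<epsilon> / 2 * 2^L" using L(1) \<open>\<epsilon> > 0\<close> by (simp add: field_simps)
    then have "2^(n - L) * 1 < 2^(n - L) * (\<epsilon> / 2 * (2::real)^L)" by simp
    also have "\<dots> = \<epsilon> / 2 * 2^n" using L(2) by (simp add: power_add[symmetric])
    finally show ?thesis by simp
  qed
  finally show ?thesis .
qed

lemma inner_count_small:
  fixes \<epsilon> :: real
  assumes "\<epsilon> > 0"
  shows "eventually (\<lambda>n. inner_count n t < \<epsilon> * 2^n) sequentially"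
  using assms
proof (induction t arbitrary: \<epsilon>)
  case (Leaf i)
  then show ?case by (simp add: inner_count_Leaf)
next
  case (Node2 s t)
  have "eventually (\<lambda>n. inner_count n s < \<epsilon> * 2^n \<and> inner_count n t < \<epsilon> * 2^n) sequentially"
    using Node2 by (simp add: eventually_conj_iff)
  then have "eventually (\<lambda>n. inner_count (Suc n) (Node2 s t) < \<epsilon> * 2^Suc n) sequentially"
    by eventually_elim (simp add: inner_count_Suc)
  then show ?case
    by (rule eventually_sequentially_Suc[where P = "\<lambda>n. inner_count n (Node2 s t) < \<epsilon> * 2^n",
          THEN iffD1])
next
  case (NodeW ts)
  obtain L where L: "2 / \<epsilon> < 2^L" using real_arch_pow[of 2 "2 / \<epsilon>"] by auto
  have "eventually (\<lambda>n. \<forall>l\<in>{..<L}. inner_count (n - Suc l) (ts l) < \<epsilon> / 2 * 2^(n - Suc l))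
      sequentially"
  proof (intro eventually_ball_finite ballI)
    fix l
    have "eventually (\<lambda>n. inner_count n (ts l) < \<epsilon> / 2 * 2^n) sequentially"
      using NodeW.IH[of "ts l" "\<epsilon> / 2"] NodeW.prems by simp
    then show "eventually (\<lambda>n. inner_count (n - Suc l) (ts l) < \<epsilon> / 2 * 2^(n - Suc l)) sequentially"
      by (rule eventually_compose_filterlim[OF _ filterlim_minus_const_nat_at_top])
  qed simp
  moreover have "eventually (\<lambda>n. L \<le> n) sequentially" by (rule eventually_ge_at_top)
  ultimately show ?case
    by eventually_elim (rule inner_count_NodeW_less[OF NodeW.prems L]; simp)
qed

lemma inner_count_quarter: "eventually (\<lambda>n. 4 * inner_count n t \<le> 2^n) sequentially"
proof -
  have "eventually (\<lambda>n. inner_count n t < 1/4 * 2^n) sequentially"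
    by (rule inner_count_small) simp
  then show ?thesis
  proof eventually_elim
    case (elim n)
    then have "real (4 * inner_count n t) \<le> real (2^n)" by simp
    then show ?case by (simp only: of_nat_le_iff)
  qed
qed

section \<open>Common members of two frontiers\<close>

lemma count_Leaf_le_sum_weight: "real (count M (Leaf i)) \<le> (\<Sum>u\<in>#M. weight u i)"
proof (induction M)
  case (add u M)
  have "(if u = Leaf i then 1 else 0) \<le> weight u i" by (simp add: weight_nonneg)
  with add show ?case by auto
qed simp

lemma sum_sum_weight_le_size: "finite I \<Longrightarrow> (\<Sum>i\<in>I. \<Sum>u\<in>#M. weight u i) \<le> size M"
proof (induction M)
  case (add u M)
  then show ?case using sum_weight_le_1[of I u] by (simp add: sum.distrib)
qed simp

lemma size_filter_is_leaf:
  assumes "finite I" and "\<And>i. Leaf i \<in># M \<Longrightarrow> i \<in> I"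
  shows "size (filter_mset is_leaf M) = (\<Sum>i\<in>I. count M (Leaf i))"
  using assms(2)
proof (induction M)
  case (add u M)
  then have IH: "size (filter_mset is_leaf M) = (\<Sum>i\<in>I. count M (Leaf i))" by simp
  show ?case
  proof (cases u)
    case (Leaf j)
    then have "j \<in> I" using add.prems by simp
    have "(\<Sum>i\<in>I. count (add_mset u M) (Leaf i))
        = (\<Sum>i\<in>I. count M (Leaf i) + (if i = j then 1 else 0))"
      using Leaf by (intro sum.cong) auto
    also have "\<dots> = (\<Sum>i\<in>I. count M (Leaf i)) + 1"
      using \<open>j \<in> I\<close> assms(1) by (simp add: sum.distrib)
    finally show ?thesis using IH Leaf by simp
  qed (use IH in simp_all)
qed simp

text \<open>Label by label, the leaves in each family are bounded by the common total weight, so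
  leaves that are not shared are paid for by the total weight, which is at most the size.\<close>
lemma leaves_le_size_inter:
  fixes A B :: "'i tree multiset"
  assumes same_weight: "\<And>j. (\<Sum>u\<in>#A. weight u j) = (\<Sum>u\<in>#B. weight u j)"
  shows "size (filter_mset is_leaf A) + size (filter_mset is_leaf B) \<le> size A + size (A \<inter># B)"
proof -
  define I where "I = {i. Leaf i \<in># A + B}"
  have "I = Leaf -` set_mset (A + B)" by (auto simp: I_def)
  then have I: "finite I" by (simp add: finite_vimageI inj_def)
  define W where "W = (\<lambda>i. \<Sum>u\<in>#A. weight u i)"
  have leaves: "real (size (filter_mset is_leaf M)) = (\<Sum>i\<in>I. real (count M (Leaf i)))"
    if "M \<subseteq># A + B" for M
  proof -
    have "size (filter_mset is_leaf M) = (\<Sum>i\<in>I. count M (Leaf i))"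
      by (rule size_filter_is_leaf[OF I]) (use that in \<open>auto simp: I_def dest: mset_subset_eqD\<close>)
    then show ?thesis by (simp only: of_nat_sum)
  qed
  have "(\<Sum>i\<in>I. real (count A (Leaf i)) + real (count B (Leaf i)) - W i)
      \<le> (\<Sum>i\<in>I. real (count (A \<inter># B) (Leaf i)))"
  proof (rule sum_mono)
    fix i
    have "real (count A (Leaf i)) \<le> W i" "real (count B (Leaf i)) \<le> W i"
      using count_Leaf_le_sum_weight[of A i] count_Leaf_le_sum_weight[of B i] same_weight[of i]
      by (simp_all add: W_def)
    then show "real (count A (Leaf i)) + real (count B (Leaf i)) - W i
        \<le> real (count (A \<inter># B) (Leaf i))"
      by (simp add: min_def)
  qed
  also have "\<dots> = size (filter_mset is_leaf (A \<inter># B))"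
    by (rule leaves[symmetric]) (simp add: subset_mset.le_infI1)
  also have "\<dots> \<le> size (A \<inter># B)"
    by (simp only: of_nat_le_iff size_filter_mset_lesseq)
  moreover have "sum W I \<le> size A"
    unfolding W_def by (rule sum_sum_weight_le_size[OF I])
  ultimately have "real (size (filter_mset is_leaf A)) + real (size (filter_mset is_leaf B))
      \<le> real (size A) + real (size (A \<inter># B))"
    by (simp add: leaves sum.distrib sum_subtractf)
  then show ?thesis by (simp only: of_nat_add[symmetric] of_nat_le_iff)
qed

lemma size_inter_large:
  fixes A B :: "'i tree multiset"
  assumes same_weight: "\<And>j. (\<Sum>u\<in>#A. weight u j) = (\<Sum>u\<in>#B. weight u j)"
    and sizes: "size A = N" "size B = N"
    and few_inner: "4 * size (filter_mset (\<lambda>u. \<not> is_leaf u) A) \<le> N"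
      "4 * size (filter_mset (\<lambda>u. \<not> is_leaf u) B) \<le> N"
  shows "N \<le> 2 * size (A \<inter># B)"
proof -
  have partition:
    "size (filter_mset is_leaf M) + size (filter_mset (\<lambda>u. \<not> is_leaf u) M) = size M" for M
    by (metis multiset_partition size_union)
  show ?thesis
    using leaves_le_size_inter[OF same_weight] partition[of A] partition[of B] sizes few_inner
    by linarith
qed

lemma frontiers_share_half:
  assumes "weight s = weight t"
  obtains k C where "C \<subseteq># frontier (Suc k) s" "C \<subseteq># frontier (Suc k) t" "size C = 2^k"
proof -
  have "eventually (\<lambda>n. 4 * inner_count n s \<le> 2^n \<and> 4 * inner_count n t \<le> 2^n) sequentially"
    by (intro eventually_conj inner_count_quarter)
  then obtain k where "\<forall>n\<ge>k. 4 * inner_count n s \<le> 2^n \<and> 4 * inner_count n t \<le> 2^n"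
    by (auto simp: eventually_sequentially)
  then have "4 * inner_count (Suc k) s \<le> 2^Suc k" "4 * inner_count (Suc k) t \<le> 2^Suc k"
    using le_SucI by blast+
  moreover have "(\<Sum>u\<in>#frontier (Suc k) s. weight u j) = (\<Sum>u\<in>#frontier (Suc k) t. weight u j)"
    for j
    by (simp only: sum_weight_frontier assms)
  ultimately have "2^Suc k \<le> 2 * size (frontier (Suc k) s \<inter># frontier (Suc k) t)"
    by (intro size_inter_large) (simp_all add: inner_count_def)
  then have "2^k \<le> size (frontier (Suc k) s \<inter># frontier (Suc k) t)" by simp
  from ex_submset_of_size[OF this] obtain C
    where C: "C \<subseteq># frontier (Suc k) s \<inter># frontier (Suc k) t" "size C = 2^k"
    by auto
  show ?thesis
    by (rule that[of C k]) (use C in \<open>simp_all only: subset_mset.le_inf_iff\<close>)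
qed

lemma equal_weight_split:
  assumes it: "iterative m" and w: "weight s = weight t"
  obtains c s' t' where "weight s' = weight t'"
    and "val m s x = m c (val m s' x)" and "val m t x = m c (val m t' x)"
proof -
  obtain k C where CA: "C \<subseteq># frontier (Suc k) s" and CB: "C \<subseteq># frontier (Suc k) t"
    and C: "size C = 2^k"
    using frontiers_share_half[OF w] by blast
  have "size (frontier (Suc k) s - C) = 2^k" "size (frontier (Suc k) t - C) = 2^k"
    using CA CB C by (simp_all add: size_Diff_submset)
  then obtain c d e where c: "indexed_mset (2^k) c = C"
    and d: "indexed_mset (2^k) d = frontier (Suc k) s - C"
    and e: "indexed_mset (2^k) e = frontier (Suc k) t - C"
    using ex_indexed_mset[of C] ex_indexed_mset[of "frontier (Suc k) s - C"]
      ex_indexed_mset[of "frontier (Suc k) t - C"] C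
    by auto
  have s: "frontier (Suc k) s = indexed_mset (2^k) c + indexed_mset (2^k) d"
    using CA by (simp add: c d)
  have t: "frontier (Suc k) t = indexed_mset (2^k) c + indexed_mset (2^k) e"
    using CB by (simp add: c e)
  have "weight (balanced_tree k d) = weight (balanced_tree k e)"
    by (rule weight_balanced_tree_cancel[where C = C])
      (simp only: c[symmetric] s[symmetric] t[symmetric] sum_weight_frontier w)
  from this val_split_frontier[OF it s] val_split_frontier[OF it t] show ?thesis by (rule that)
qed

theorem mainTheorem11:
  fixes m :: "'a \<Rightarrow> 'a \<Rightarrow> 'a" and s t :: "'i tree"
  assumes "iterative m"
    and "weight s = weight t"
  shows "\<forall>x :: 'i \<Rightarrow> 'a. val m s x = val m t x"
proof
  fix x :: "'i \<Rightarrow> 'a"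
  let ?R = "{(val m s' x, val m t' x) | s' t'. weight s' = weight t'}"
  show "val m s x = val m t x"
  proof (rule iterative_coinduct[OF assms(1)])
    show "(val m s x, val m t x) \<in> ?R" using assms(2) by blast
  next
    fix a b assume "(a, b) \<in> ?R"
    then obtain s' t' where "a = val m s' x" "b = val m t' x" "weight s' = weight t'" by blast
    moreover obtain c s'' t'' where "weight s'' = weight t''"
      "val m s' x = m c (val m s'' x)" "val m t' x = m c (val m t'' x)"
      using equal_weight_split[OF assms(1) \<open>weight s' = weight t'\<close>] by blast
    ultimately show "\<exists>c a' b'. (a', b') \<in> ?R \<and> a = m c a' \<and> b = m c b'" by blast
  qed
qed

end
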